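(* Let $n$ be a positive integer. All eigenvalues of the Fibonacci--Redheffer matrix $F_R(n)$ are real and simple (of algebraic multiplicity $1$). Furthermore, if $\lambda_1<\lambda_2<\cdots<\lambda_n$ are the eigenvalues of $F_R(n)$, then \[ \lambda_1<1,\qquad F_i<\lambda_i<F_{i+1}\ \ (i=2,3,\ldots,n-1),\qquad \lambda_n>F_n. \]
   Context: The Fibonacci numbers are $F_1=F_2=1$, $F_n=F_{n-1}+F_{n-2}$ for $n\ge 3$. The Fibonacci--Redheffer matrix $F_R(n)=[F_R(i,j)]_{i,j=1}^n$ is defined by $F_R(i,j)=1$ if $j=1$; $F_R(i,j)=F_i$ if $i\mid j$; and $F_R(i,j)=0$ otherwise. *)

theory Defs
  imports "Jordan_Normal_Form.Char_Poly" "HOL-Number_Theory.Fib"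
begin

text \<open>Fibonacci--Redheffer matrix F_R(n), as a complex n x n matrix.
  Paper indices 1..n correspond to 0-based indices i, j < n via i+1, j+1.
  fib is the library Fibonacci function: fib 1 = fib 2 = 1.\<close>
definition FR :: "nat \<Rightarrow> complex mat" where
  "FR n = mat n n (\<lambda>(i, j).
      if j + 1 = 1 then 1
      else if (i + 1) dvd (j + 1) then of_nat (fib (i + 1))
      else 0)"

end

theory Submission
  imports Defs
begin

(* Write F_i = fib i and index rows and columns by 1..n. Then x I - F_R(n) = A(x) - u e_1^T,
   where A(x) is upper triangular with diagonal entries x - F_i and entries -F_i at (i, j) for
   i < j, i | j, and u = (0, 1, ..., 1)^T. By the matrix determinant lemma,
   det (x I - F_R(n)) = prod_i (x - F_i) - h_1(x), where h_i(x) / prod_{i <= c <= n} (x - F_c) is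
   the i-th entry of A(x)^-1 u; back substitution shows that each h_i is a polynomial.
   At x = F_k with 2 <= k <= n the product vanishes. For m >= k the ratios
   h_m(F_k) / prod_{m < c <= n} (F_k - F_c) lie in (0, 1], by downward induction on m, because
   F_m * sum {1 / (F_l - F_m) | m < l <= n, m dvd l} < 1; this is a geometric series estimate, as
   F_((t+1)m) - F_m >= 2 (F_(tm) - F_m). Propagating signs down to h_1 gives
   (-1)^(n-k) det (F_k I - F_R(n)) < 0. Hence the characteristic polynomial changes sign on each of
   the n disjoint intervals (-oo, F_2), (F_k, F_(k+1)) for 2 <= k < n, and (F_n, oo). The n roots
   found there are all the roots, so they are the eigenvalues and each of them is simple. *)

section \<open>A geometric estimate for Fibonacci numbers\<close>

lemma sum_inverse_less_of_growth:
  fixes a :: "nat \<Rightarrow> real"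
  assumes q: "1 < q"
    and pos: "\<And>t. m \<le> t \<Longrightarrow> 0 < a t"
    and growth: "\<And>t. m \<le> t \<Longrightarrow> q * a t \<le> a (Suc t)"
  shows "(\<Sum>t = m..T. 1 / a t) < q / (q - 1) / a m"
proof (cases "m \<le> Suc T")
  case False
  then show ?thesis using q pos[of m] by simp
next
  case True
  let ?c = "q / (q - 1)"
  have "1 / a t \<le> ?c * (1 / a t - 1 / a (Suc t))" if "m \<le> t" for t
  proof -
    have "0 < q * a t" using pos[OF that] q by simp
    then have "1 / a (Suc t) \<le> 1 / (q * a t)"
      using growth[OF that] by (intro divide_left_mono) auto
    then have "?c * (1 / a t - 1 / (q * a t)) \<le> ?c * (1 / a t - 1 / a (Suc t))"
      using q by (intro mult_left_mono) auto
    moreover have "?c * (1 / a t - 1 / (q * a t)) = 1 / a t"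
      using q pos[OF that] by (simp add: field_simps)
    ultimately show ?thesis by simp
  qed
  then have "(\<Sum>t = m..T. 1 / a t) \<le> (\<Sum>t = m..T. ?c * (1 / a t - 1 / a (Suc t)))"
    by (intro sum_mono) auto
  also have "\<dots> = ?c * (\<Sum>t = m..T. 1 / a t - 1 / a (Suc t))"
    by (rule sum_distrib_left[symmetric])
  also have "\<dots> = ?c * (1 / a m - 1 / a (Suc T))"
    using sum_Suc_diff[OF True, of "\<lambda>t. - (1 / a t)"] by simp
  also have "\<dots> < ?c / a m"
    using q pos[of m] pos[of "Suc T"] True by (simp add: field_simps)
  finally show ?thesis .
qed

lemma fib_strict_mono:
  assumes "2 \<le> i" "i < j"
  shows "fib i < fib j"
proof -
  have "fib (Suc i) = fib i + fib (i - 1)"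
    using fib_plus_2[of "i - 1"] assms(1) by (simp add: numeral_2_eq_2)
  moreover have "0 < fib (i - 1)" using assms(1) by (simp add: fib_neq_0_nat)
  ultimately show ?thesis using fib_mono[of "Suc i" j] assms(2) by simp
qed

lemma fib_double_le_fib_add:
  assumes "2 \<le> j"
  shows "2 * fib m \<le> fib (m + j)"
proof -
  have "2 * fib m \<le> fib (m + 2)"
    using fib_plus_2[of m] fib_Suc_mono[of m] by simp
  also have "\<dots> \<le> fib (m + j)" using assms by (intro fib_mono) simp
  finally show ?thesis .
qed

lemma fib_triple_le_fib_double:
  assumes "2 \<le> j"
  shows "3 * fib j \<le> fib (2 * j)"
proof -
  have "1 \<le> fib (j - 1)" using assms by (simp add: Suc_le_eq fib_neq_0_nat)
  then show ?thesis by (simp add: fib_rec_even')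
qed

definition multiples_upto :: "nat \<Rightarrow> nat \<Rightarrow> nat set" where
  "multiples_upto n j = {l. j < l \<and> l \<le> n \<and> j dvd l}"

lemma finite_multiples_upto [simp]: "finite (multiples_upto n j)"
  unfolding multiples_upto_def by (rule finite_subset[of _ "{..n}"]) auto

lemma fib_multiples_inverse_sum_less:
  assumes j: "2 \<le> j"
  shows "fib j * (\<Sum>l\<in>multiples_upto n j. 1 / (real (fib l) - fib j)) < 1"
proof -
  define a where "a t = real (fib (t * j)) - fib j" for t
  have fib_j: "0 < real (fib j)" using j by (simp add: fib_neq_0_nat)
  have a2: "2 * fib j \<le> a 2"
    using fib_triple_le_fib_double[OF j]
    unfolding a_def of_nat_le_iff[symmetric] by (simp add: mult.commute)
  have pos: "0 < a t" if "2 \<le> t" for t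
    using fib_strict_mono[OF j, of "t * j"] that j by (simp add: a_def)
  have growth: "2 * a t \<le> a (Suc t)" if "2 \<le> t" for t
    using fib_double_le_fib_add[OF j, of "t * j"] fib_j
    unfolding a_def of_nat_le_iff[symmetric] by (simp add: add.commute)
  have sub: "multiples_upto n j \<subseteq> (\<lambda>t. t * j) ` {2..n}"
  proof
    fix l assume "l \<in> multiples_upto n j"
    then obtain t where l: "l = t * j" "j < l" "l \<le> n"
      by (auto simp: multiples_upto_def mult.commute elim!: dvdE)
    then have "\<not> t \<le> 1" using mult_le_mono1[of t 1 j] by auto
    moreover have "t \<le> n"
      using l j by (metis le_trans mult_le_mono2 nat_mult_1_right one_le_numeral mult.commute)
    ultimately show "l \<in> (\<lambda>t. t * j) ` {2..n}" using l by auto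
  qed
  have "(\<Sum>l\<in>multiples_upto n j. 1 / (real (fib l) - fib j))
      \<le> (\<Sum>l\<in>(\<lambda>t. t * j) ` {2..n}. 1 / (real (fib l) - fib j))"
    using sub by (intro sum_mono2) (auto intro!: fib_mono)
  also have "\<dots> = (\<Sum>t = 2..n. 1 / a t)"
    using j by (subst sum.reindex) (auto simp: inj_on_def a_def)
  also have "\<dots> < 2 / (2 - 1) / a 2"
    using pos growth by (intro sum_inverse_less_of_growth) auto
  also have "\<dots> \<le> 1 / fib j"
    using a2 fib_j by (simp add: field_simps)
  finally show ?thesis using fib_j by (simp add: field_simps)
qed

section \<open>Real roots of polynomials\<close>

lemma poly_root_between:
  fixes p :: "real poly"
  assumes "a < b" "s * poly p a < 0" "0 < s * poly p b"
  obtains y where "a < y" "y < b" "poly p y = 0"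
proof -
  have "s * s * (poly p a * poly p b) < 0"
    using mult_neg_pos[OF assms(2,3)] by (simp add: mult_ac)
  then have "poly p a * poly p b < 0"
    using zero_le_square[of s] by (auto simp: mult_less_0_iff)
  then show ?thesis using poly_IVT[OF assms(1)] that by blast
qed

lemma poly_roots_in_intervals:
  fixes p :: "real poly" and lo hi s :: "nat \<Rightarrow> real"
  assumes "\<And>k. k \<in> {1..n} \<Longrightarrow> lo k < hi k"
    and "\<And>k. k \<in> {1..n} \<Longrightarrow> s k * poly p (lo k) < 0"
    and "\<And>k. k \<in> {1..n} \<Longrightarrow> 0 < s k * poly p (hi k)"
    and "\<And>i j. i \<in> {1..n} \<Longrightarrow> j \<in> {1..n} \<Longrightarrow> i < j \<Longrightarrow> hi i \<le> lo j"
  obtains r where "\<And>k. k \<in> {1..n} \<Longrightarrow> poly p (r k) = 0 \<and> lo k < r k \<and> r k < hi k"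
    and "strict_mono_on {1..n} r"
proof -
  have "\<forall>k\<in>{1..n}. \<exists>y. poly p y = 0 \<and> lo k < y \<and> y < hi k"
  proof
    fix k assume k: "k \<in> {1..n}"
    show "\<exists>y. poly p y = 0 \<and> lo k < y \<and> y < hi k"
      by (rule poly_root_between[OF assms(1-3)[OF k]]) blast
  qed
  then obtain r where r: "\<And>k. k \<in> {1..n} \<Longrightarrow> poly p (r k) = 0 \<and> lo k < r k \<and> r k < hi k"
    by metis
  moreover have "strict_mono_on {1..n} r"
  proof (rule strict_mono_onI)
    fix i j assume ij: "i \<in> {1..n}" "j \<in> {1..n}" "i < j"
    then have "r i < hi i" "hi i \<le> lo j" "lo j < r j" using r assms(4) by auto
    then show "r i < r j" by linarith
  qed
  ultimately show ?thesis using that by blast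
qed

lemma poly_sign_at_bot:
  fixes p :: "real poly"
  assumes "0 < lead_coeff p"
  obtains a where "\<And>x. x \<le> a \<Longrightarrow> 0 < (-1) ^ degree p * poly p x"
proof -
  define q where "q = Polynomial.smult ((-1) ^ degree p) (p \<circ>\<^sub>p [:0, -1:])"
  have "lead_coeff (p \<circ>\<^sub>p [:0, -1:]) = lead_coeff p * (-1) ^ degree p"
    by (subst lead_coeff_comp) simp_all
  then have "lead_coeff q = lead_coeff p * ((-1) ^ degree p * (-1) ^ degree p)"
    by (simp add: q_def lead_coeff_smult mult_ac)
  then have "lead_coeff q = lead_coeff p" by (simp flip: power_mult_distrib)
  then obtain N where N: "\<And>y. N \<le> y \<Longrightarrow> lead_coeff p \<le> poly q y"
    using poly_pinfty_gt_lc[of q] assms by auto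
  have "0 < (-1) ^ degree p * poly p x" if "x \<le> - N" for x
    using N[of "- x"] that assms by (simp add: q_def poly_pcompose)
  then show ?thesis using that by blast
qed

lemma proots_eq_mset_set:
  fixes p :: "complex poly"
  assumes p: "p \<noteq> 0" and R: "finite R" "card R = degree p"
    and roots: "\<And>z. z \<in> R \<Longrightarrow> poly p z = 0"
  shows "proots p = mset_set R"
proof -
  have "mset_set R \<subseteq># proots p"
  proof (rule mset_subset_eqI)
    fix z
    show "count (mset_set R) z \<le> count (proots p) z"
      using roots[of z] p R(1) order_root[of p z] by (cases "z \<in> R") auto
  qed
  moreover have "size (mset_set R) = size (proots p)"
    using R by (simp add: size_proots_complex)
  ultimately show ?thesis
    using mset_subset_size[of "mset_set R" "proots p"] by (auto simp: subset_mset.le_less)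
qed

lemma strict_mono_on_eq_if_image_eq:
  fixes f g :: "nat \<Rightarrow> 'a :: linorder"
  assumes f: "strict_mono_on {m..n} f" and g: "strict_mono_on {m..n} g"
    and image: "f ` {m..n} = g ` {m..n}" and i: "i \<in> {m..n}"
  shows "f i = g i"
proof -
  have sorted: "sorted_wrt (<) (map h [m..<Suc n])" if "strict_mono_on {m..n} h" for h :: "nat \<Rightarrow> 'a"
    by (intro sorted_wrt_map_mono[OF sorted_wrt_upt]) (auto intro!: strict_mono_onD[OF that])
  have "set (map f [m..<Suc n]) = set (map g [m..<Suc n])"
    using image by (simp add: atLeastLessThanSuc_atLeastAtMost del: upt_Suc)
  then have "map f [m..<Suc n] = map g [m..<Suc n]"
    using sorted[OF f] sorted[OF g]
    by (intro sorted_distinct_set_unique) (simp_all add: strict_sorted_iff)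
  then show ?thesis
    using i by (simp add: map_eq_conv del: upt_Suc)
qed

section \<open>The characteristic polynomial\<close>

lemma det_sub_rank_one_first_column:
  fixes A :: "'a :: comm_ring_1 mat"
  assumes A: "A \<in> carrier_mat n n" and n: "0 < n"
  shows "det (mat n n (\<lambda>(r, c). A $$ (r, c) - (if c = 0 then \<Sum>l<n. A $$ (r, l) * w l else 0)))
    = det A * (1 - w 0)" (is "det ?B = _")
proof -
  define N where "N = mat n n (\<lambda>(r, c). (if r = c then 1 else 0) - (if c = 0 then w r else 0))"
  have "?B = A * N"
  proof (rule eq_matI)
    fix r c assume "r < dim_row (A * N)" "c < dim_col (A * N)"
    then have r: "r < n" and c: "c < n" using A by (auto simp: N_def)
    have "(A * N) $$ (r, c) =
        (\<Sum>l<n. A $$ (r, l) * ((if l = c then 1 else 0) - (if c = 0 then w l else 0)))"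
      using A r c by (simp add: N_def scalar_prod_def lessThan_atLeast0)
    also have "\<dots> = ?B $$ (r, c)"
      using r c by (simp add: right_diff_distrib sum_subtractf if_distrib[of "(*) _"] cong: if_cong)
    finally show "?B $$ (r, c) = (A * N) $$ (r, c)" by simp
  qed (use A in \<open>auto simp: N_def\<close>)
  moreover have "det N = 1 - w 0"
  proof -
    have "det N = (\<Prod>r = 0..<n. N $$ (r, r))"
      by (subst det_lower_triangular[of n]) (auto simp: N_def prod_list_diag_prod)
    also have "\<dots> = N $$ (0, 0)"
      using n by (subst prod.atLeast_Suc_lessThan) (auto simp: N_def intro!: prod.neutral)
    finally show ?thesis using n by (simp add: N_def)
  qed
  ultimately show ?thesis using A by (simp add: det_mult[of _ n] N_def)
qed

definition FR_real :: "nat \<Rightarrow> real mat" where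
  "FR_real n = mat n n (\<lambda>(i, j).
      if j + 1 = 1 then 1
      else if (i + 1) dvd (j + 1) then real (fib (i + 1))
      else 0)"

lemma FR_real_carrier [simp]: "FR_real n \<in> carrier_mat n n"
  by (simp add: FR_real_def)

lemma FR_carrier: "FR n \<in> carrier_mat n n"
  by (simp add: FR_def)

lemma FR_eq_map_FR_real: "FR n = map_mat complex_of_real (FR_real n)"
  by (rule eq_matI) (auto simp: FR_def FR_real_def)

(* h_a from the proof idea: the a-th entry of A(x)^-1 u, multiplied by prod_{a <= c <= n} (x - F_c).
   The sum is back substitution in the triangular system A(x) w = u; the leading product is
   absent for a = 1 because u_1 = 0. *)
function fr_numer :: "nat \<Rightarrow> nat \<Rightarrow> real poly" where
  "fr_numer n a =
     (if a = 1 then 0 else (\<Prod>c\<in>{a<..n}. [:- real (fib c), 1:])) +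
     Polynomial.smult (fib a)
       (\<Sum>l\<in>multiples_upto n a. fr_numer n l * (\<Prod>c\<in>{a<..<l}. [:- real (fib c), 1:]))"
  by pat_completeness auto
termination by (relation "measure (\<lambda>(n, a). Suc n - a)") (auto simp: multiples_upto_def)

declare fr_numer.simps [simp del]

lemma poly_fr_numer:
  fixes x :: real
  shows "poly (fr_numer n a) x =
     (if a = 1 then 0 else (\<Prod>c\<in>{a<..n}. x - fib c)) +
     fib a * (\<Sum>l\<in>multiples_upto n a. poly (fr_numer n l) x * (\<Prod>c\<in>{a<..<l}. x - fib c))"
  by (subst fr_numer.simps) (simp add: poly_sum poly_prod)

definition fr_poly :: "nat \<Rightarrow> real poly" where
  "fr_poly n = (\<Prod>c\<in>{1..n}. [:- real (fib c), 1:]) - fr_numer n 1"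

lemma poly_fr_poly:
  fixes x :: real
  shows "poly (fr_poly n) x = (\<Prod>c\<in>{1..n}. x - fib c) - poly (fr_numer n 1) x"
  by (simp add: fr_poly_def poly_prod)

definition fr_ratio :: "nat \<Rightarrow> real \<Rightarrow> nat \<Rightarrow> real" where
  "fr_ratio n x a = poly (fr_numer n a) x / (\<Prod>c\<in>{a<..n}. x - fib c)"

lemma fr_ratio_rec:
  fixes x :: real
  assumes x: "\<And>c. a < c \<Longrightarrow> c \<le> n \<Longrightarrow> x \<noteq> fib c"
  shows "fr_ratio n x a =
    (if a = 1 then 0 else 1) + fib a * (\<Sum>l\<in>multiples_upto n a. fr_ratio n x l / (x - fib l))"
proof -
  let ?D = "\<lambda>b. \<Prod>c\<in>{a<..<b}. x - fib c"
  let ?E = "\<lambda>a. \<Prod>c\<in>{a<..n}. x - fib c"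
  have "x - fib c \<noteq> 0" if "c \<in> {a<..n}" for c using x that by simp
  then have E: "?E a \<noteq> 0" by (subst prod_zero_iff) auto
  have split: "?E a = ?D l * ((x - fib l) * ?E l)" if "l \<in> multiples_upto n a" for l
  proof -
    have "a < l" "l \<le> n" using that by (auto simp: multiples_upto_def)
    then have "{a<..n} = {a<..<l} \<union> insert l {l<..n}" "{a<..<l} \<inter> insert l {l<..n} = {}"
      by auto
    then show ?thesis by (simp add: prod.union_disjoint)
  qed
  have "fr_ratio n x a = ((if a = 1 then 0 else ?E a) +
      fib a * (\<Sum>l\<in>multiples_upto n a. poly (fr_numer n l) x * ?D l)) / ?E a"
    unfolding fr_ratio_def by (subst poly_fr_numer) (rule refl)
  also have "\<dots> = (if a = 1 then 0 else 1) +
      fib a * (\<Sum>l\<in>multiples_upto n a. poly (fr_numer n l) x * ?D l / ?E a)"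
    using E by (simp add: add_divide_distrib sum_divide_distrib[symmetric])
  also have "(\<Sum>l\<in>multiples_upto n a. poly (fr_numer n l) x * ?D l / ?E a) =
      (\<Sum>l\<in>multiples_upto n a. fr_ratio n x l / (x - fib l))"
  proof (rule sum.cong)
    fix l assume l: "l \<in> multiples_upto n a"
    have "a < l" "l \<le> n" using l by (auto simp: multiples_upto_def)
    then have "?D l \<noteq> 0" "x - fib l \<noteq> 0"
      using x by (auto simp: prod_zero_iff)
    then show "poly (fr_numer n l) x * ?D l / ?E a = fr_ratio n x l / (x - fib l)"
      unfolding split[OF l] fr_ratio_def by simp
  qed simp
  finally show ?thesis .
qed

(* A(x) from the proof idea, with 0-based indices. *)
definition fr_upper :: "nat \<Rightarrow> real \<Rightarrow> real mat" where
  "fr_upper n x = mat n n (\<lambda>(r, c). (if r = c then x - fib (Suc r) else 0)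
      - (if r < c \<and> Suc r dvd Suc c then real (fib (Suc r)) else 0))"

lemma det_fr_upper: "det (fr_upper n x) = (\<Prod>c\<in>{1..n}. x - fib c)"
proof -
  have "det (fr_upper n x) = (\<Prod>r<n. x - fib (Suc r))"
    by (subst det_upper_triangular[of _ n])
      (auto simp: fr_upper_def upper_triangular_def prod_list_diag_prod lessThan_atLeast0)
  then show ?thesis by (simp add: prod.atLeast1_atMost_eq)
qed

lemma fr_upper_mult_fr_ratio:
  fixes x :: real
  assumes x: "\<And>c. 1 \<le> c \<Longrightarrow> c \<le> n \<Longrightarrow> x \<noteq> fib c" and r: "r < n"
  shows "(\<Sum>l<n. fr_upper n x $$ (r, l) * (fr_ratio n x (Suc l) / (x - fib (Suc l))))
    = (if r = 0 then 0 else 1)"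
proof -
  let ?w = "\<lambda>l. fr_ratio n x (Suc l) / (x - fib (Suc l))"
  let ?M = "{l \<in> {..<n}. r < l \<and> Suc r dvd Suc l}"
  have "(\<Sum>l<n. fr_upper n x $$ (r, l) * ?w l) =
      (\<Sum>l<n. if l = r then (x - fib (Suc r)) * ?w l else 0) -
      (\<Sum>l<n. if r < l \<and> Suc r dvd Suc l then fib (Suc r) * ?w l else 0)"
    unfolding sum_subtractf[symmetric] by (rule sum.cong) (auto simp: fr_upper_def r)
  also have "\<dots> = (x - fib (Suc r)) * ?w r - fib (Suc r) * (\<Sum>l\<in>?M. ?w l)"
    using r by (simp add: sum.inter_filter[symmetric] sum_distrib_left)
  also have "(\<Sum>l\<in>?M. ?w l) = (\<Sum>j\<in>multiples_upto n (Suc r). fr_ratio n x j / (x - fib j))"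
  proof -
    have M: "Suc ` ?M = multiples_upto n (Suc r)"
    proof (intro equalityI subsetI)
      fix j assume "j \<in> multiples_upto n (Suc r)"
      then have "j - 1 \<in> ?M" "j = Suc (j - 1)" by (auto simp: multiples_upto_def)
      then show "j \<in> Suc ` ?M" by blast
    qed (auto simp: multiples_upto_def)
    show ?thesis
      by (rule sum.reindex_cong[symmetric, of Suc]) (simp_all flip: M)
  qed
  also have "(x - fib (Suc r)) * ?w r = fr_ratio n x (Suc r)"
    using x[of "Suc r"] r by simp
  also have "fr_ratio n x (Suc r) = (if r = 0 then 0 else 1) +
      fib (Suc r) * (\<Sum>j\<in>multiples_upto n (Suc r). fr_ratio n x j / (x - fib j))"
    by (subst fr_ratio_rec) (use x in auto)
  finally show ?thesis by simp
qed

lemma poly_char_poly_FR_real: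
  fixes x :: real
  assumes n: "1 \<le> n" and x: "\<And>c. 1 \<le> c \<Longrightarrow> c \<le> n \<Longrightarrow> x \<noteq> fib c"
  shows "poly (char_poly (FR_real n)) x = poly (fr_poly n) x"
proof -
  let ?A = "fr_upper n x"
  define w where "w l = fr_ratio n x (Suc l) / (x - fib (Suc l))" for l
  have row: "(\<Sum>l<n. ?A $$ (r, l) * w l) = (if r = 0 then 0 else 1)" if "r < n" for r
    unfolding w_def by (rule fr_upper_mult_fr_ratio[OF x that])
  have "- char_matrix (FR_real n) x =
      mat n n (\<lambda>(r, c). ?A $$ (r, c) - (if c = 0 then \<Sum>l<n. ?A $$ (r, l) * w l else 0))"
    by (rule eq_matI)
      (simp_all add: row, auto simp: char_matrix_def FR_real_def fr_upper_def dest: dvd_imp_le)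
  moreover have "?A \<in> carrier_mat n n" by (simp add: fr_upper_def)
  ultimately have "poly (char_poly (FR_real n)) x = (\<Prod>c\<in>{1..n}. x - fib c) * (1 - w 0)"
    using n by (simp add: char_poly_matrix[OF FR_real_carrier] det_sub_rank_one_first_column det_fr_upper)
  also have "\<dots> = poly (fr_poly n) x"
  proof -
    have "{1..n} = insert 1 {1<..n}" using n by auto
    then have P: "(\<Prod>c\<in>{1..n}. x - fib c) = (x - 1) * (\<Prod>c\<in>{1<..n}. x - fib c)"
      by simp
    have "x - 1 \<noteq> 0" "(\<Prod>c\<in>{1<..n}. x - fib c) \<noteq> 0"
      using x[of 1] x n by (auto simp: prod_zero_iff)
    then show ?thesis
      unfolding poly_fr_poly P w_def fr_ratio_def by (simp add: field_simps)
  qed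
  finally show ?thesis .
qed

lemma char_poly_FR_real:
  assumes "1 \<le> n"
  shows "char_poly (FR_real n) = fr_poly n"
proof -
  let ?d = "char_poly (FR_real n) - fr_poly n"
  have "UNIV - (\<lambda>c. real (fib c)) ` {1..n} \<subseteq> {x. poly ?d x = 0}"
    by (auto intro!: poly_char_poly_FR_real[OF assms])
  moreover have "infinite (UNIV - (\<lambda>c. real (fib c)) ` {1..n})"
    by (simp add: infinite_UNIV_char_0 Diff_infinite_finite)
  ultimately have "infinite {x. poly ?d x = 0}" using finite_subset by blast
  then have "?d = 0" using poly_roots_finite by blast
  then show ?thesis by simp
qed

lemma degree_fr_poly:
  assumes "1 \<le> n"
  shows "degree (fr_poly n) = n" and "lead_coeff (fr_poly n) = 1"
  using degree_monic_char_poly[OF FR_real_carrier[of n]] char_poly_FR_real[OF assms] by simp_all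

lemma char_poly_FR_ne_zero: "char_poly (FR n) \<noteq> 0"
  using degree_monic_char_poly[OF FR_carrier, of n] by auto

lemma char_poly_FR:
  assumes "1 \<le> n"
  shows "char_poly (FR n) = map_poly complex_of_real (fr_poly n)"
  using of_real_hom.char_poly_hom[OF FR_real_carrier[of n]] char_poly_FR_real[OF assms]
  by (simp add: FR_eq_map_FR_real)

section \<open>Signs at the Fibonacci numbers and the roots\<close>

lemma fr_ratio_bounds:
  assumes k: "2 \<le> k" "k \<le> m"
  shows "0 < fr_ratio n (fib k) m \<and> fr_ratio n (fib k) m \<le> 1"
  using k(2)
proof (induction "n - m" arbitrary: m rule: less_induct)
  case less
  let ?x = "real (fib k)"
  let ?S = "\<Sum>l\<in>multiples_upto n m. fr_ratio n ?x l / (?x - fib l)"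
  let ?B = "\<Sum>l\<in>multiples_upto n m. 1 / (real (fib l) - fib m)"
  have m: "2 \<le> m" using less k by simp
  have "?x \<noteq> fib c" if "m < c" for c
    using fib_strict_mono[OF k(1), of c] that less.prems by simp
  then have "fr_ratio n ?x m = 1 + fib m * ?S"
    using m by (subst fr_ratio_rec) auto
  moreover have "- (1 / (real (fib l) - fib m)) \<le> fr_ratio n ?x l / (?x - fib l)
      \<and> fr_ratio n ?x l / (?x - fib l) \<le> 0" if l: "l \<in> multiples_upto n m" for l
  proof -
    have ml: "m < l" "l \<le> n" using l by (auto simp: multiples_upto_def)
    then have IH: "0 < fr_ratio n ?x l \<and> fr_ratio n ?x l \<le> 1"
      using less.hyps[of l] less.prems by simp
    have "fib m < fib l" using fib_strict_mono[OF m ml(1)] .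
    moreover have "fib k \<le> fib m" using fib_mono[OF less.prems] .
    ultimately have "1 / (fib l - ?x) \<le> 1 / (real (fib l) - fib m)" "0 < fib l - ?x"
      by (auto intro!: divide_left_mono)
    moreover have "fr_ratio n ?x l / (?x - fib l) = - (fr_ratio n ?x l / (fib l - ?x))"
      by (simp add: divide_minus_right[symmetric])
    moreover have "fr_ratio n ?x l / (fib l - ?x) \<le> 1 / (fib l - ?x)"
      using IH \<open>0 < fib l - ?x\<close> by (intro divide_right_mono) auto
    ultimately show ?thesis using IH by auto
  qed
  then have "?S \<le> 0" and "- ?B \<le> ?S"
    by (auto intro: sum_nonpos simp: sum_negf[symmetric] intro!: sum_mono)
  moreover have "fib m * ?B < 1" using fib_multiples_inverse_sum_less[OF m] .
  moreover have "fib m * (- ?B) \<le> fib m * ?S"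
    using \<open>- ?B \<le> ?S\<close> by (intro mult_left_mono) auto
  ultimately show ?case by (auto simp: mult_nonneg_nonpos)
qed

lemma fr_numer_sign_at_fib_self:
  assumes k: "2 \<le> k" "k \<le> n"
  shows "0 < (-1) ^ (n - k) * poly (fr_numer n k) (fib k)"
proof -
  let ?x = "real (fib k)"
  have less: "?x < fib c" if "c \<in> {k<..n}" for c using fib_strict_mono[OF k(1)] that by simp
  then have "?x - fib c \<noteq> 0" if "c \<in> {k<..n}" for c using that by fastforce
  then have "(\<Prod>c\<in>{k<..n}. ?x - fib c) \<noteq> 0" by (subst prod_zero_iff) auto
  then have "(-1) ^ (n - k) * poly (fr_numer n k) ?x
      = fr_ratio n ?x k * ((-1) ^ (n - k) * (\<Prod>c\<in>{k<..n}. ?x - fib c))"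
    by (simp add: fr_ratio_def)
  also have "\<dots> = fr_ratio n ?x k * (\<Prod>c\<in>{k<..n}. fib c - ?x)"
    unfolding prod_diff_swap[of "\<lambda>_. ?x" "\<lambda>c. real (fib c)"] by (simp flip: power_add mult_2)
  also have "0 < \<dots>"
    using fr_ratio_bounds[OF k(1) order.refl] less by (intro mult_pos_pos prod_pos) auto
  finally show ?thesis .
qed

lemma poly_fr_numer_at_fib_gt:
  assumes "j < k" "k \<le> n"
  shows "poly (fr_numer n j) (fib k) =
    fib j * (\<Sum>l\<in>multiples_upto n j. poly (fr_numer n l) (fib k) * (\<Prod>c\<in>{j<..<l}. real (fib k) - fib c))"
proof -
  have "(if j = 1 then 0 else \<Prod>c\<in>{j<..n}. real (fib k) - fib c) = 0"
    using assms by (auto simp: prod_zero_iff)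
  then show ?thesis by (subst poly_fr_numer) simp
qed

lemma fr_numer_sign_at_fib:
  assumes k: "2 \<le> k" "k \<le> n" and j: "1 \<le> j" "j \<le> k"
  shows "0 \<le> (-1) ^ (n - k) * poly (fr_numer n j) (fib k)
    \<and> (j dvd k \<longrightarrow> 0 < (-1) ^ (n - k) * poly (fr_numer n j) (fib k))"
  using j
proof (induction "k - j" arbitrary: j rule: less_induct)
  case less
  let ?x = "real (fib k)"
  let ?s = "(-1) ^ (n - k) :: real"
  let ?D = "\<lambda>l. \<Prod>c\<in>{j<..<l}. ?x - fib c"
  let ?t = "\<lambda>l. ?s * poly (fr_numer n l) ?x * ?D l"
  show ?case
  proof (cases "j = k")
    case True
    then show ?thesis using fr_numer_sign_at_fib_self[OF k] by simp
  next
    case False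
    then have jk: "j < k" using less.prems by simp
    have expand: "?s * poly (fr_numer n j) ?x = fib j * (\<Sum>l\<in>multiples_upto n j. ?t l)"
      using poly_fr_numer_at_fib_gt[OF jk k(2)] by (simp add: sum_distrib_left mult_ac)
    have IH: "0 \<le> ?s * poly (fr_numer n l) ?x \<and> (l dvd k \<longrightarrow> 0 < ?s * poly (fr_numer n l) ?x)"
      if "j < l" "l \<le> k" for l
      using less.hyps[of l] that less.prems by simp
    have nonneg: "0 \<le> ?t l" if "l \<in> multiples_upto n j" for l
    proof (cases "l \<le> k")
      case True
      then have "0 \<le> ?D l" by (intro prod_nonneg) (auto intro: fib_mono)
      then show ?thesis using IH[of l] True that by (auto simp: multiples_upto_def)
    next
      case False
      then have "?D l = 0" using jk by (auto simp: prod_zero_iff)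
      then show ?thesis by (simp only: mult_zero_right order_refl)
    qed
    have "0 \<le> ?s * poly (fr_numer n j) ?x"
      unfolding expand by (intro mult_nonneg_nonneg sum_nonneg nonneg) auto
    moreover have "0 < ?s * poly (fr_numer n j) ?x" if "j dvd k"
    proof -
      have "k \<in> multiples_upto n j" using that jk k by (simp add: multiples_upto_def)
      moreover have "0 < ?D k"
        using less.prems by (intro prod_pos) (auto intro: fib_strict_mono)
      then have "0 < ?t k" using IH[OF jk order.refl] by simp
      ultimately have "0 < (\<Sum>l\<in>multiples_upto n j. ?t l)"
        using nonneg by (intro sum_pos2) auto
      then show ?thesis unfolding expand using less.prems by (simp add: fib_neq_0_nat)
    qed
    ultimately show ?thesis by blast
  qed
qed

lemma fr_poly_sign_at_fib:
  assumes "2 \<le> k" "k \<le> n"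
  shows "(-1) ^ (n - k) * poly (fr_poly n) (fib k) < 0"
proof -
  have "(\<Prod>c\<in>{1..n}. real (fib k) - fib c) = 0"
    using assms by (auto simp: prod_zero_iff)
  then have "poly (fr_poly n) (fib k) = - poly (fr_numer n 1) (fib k)"
    by (simp only: poly_fr_poly)
  then show ?thesis
    using fr_numer_sign_at_fib[OF assms, of 1] assms by simp
qed

lemma fr_poly_sign_far:
  assumes n: "1 \<le> n"
  obtains a b :: real where "a < 1" "fib n < b"
    and "(-1) ^ (n - 1) * poly (fr_poly n) a < 0" and "0 < poly (fr_poly n) b"
proof -
  obtain a where a: "\<And>x. x \<le> a \<Longrightarrow> 0 < (-1) ^ n * poly (fr_poly n) x"
    using poly_sign_at_bot[of "fr_poly n"] degree_fr_poly[OF n] by auto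
  obtain b where b: "\<And>x. b \<le> x \<Longrightarrow> 1 \<le> poly (fr_poly n) x"
    using poly_pinfty_gt_lc[of "fr_poly n"] degree_fr_poly[OF n] by auto
  have "(-1 :: real) ^ n = - ((-1) ^ (n - 1))" using n by (cases n) auto
  then show ?thesis
    using that[of "min a 0" "max b (fib n + 1)"] a[of "min a 0"] b[of "max b (fib n + 1)"]
    by (simp add: less_max_iff_disj)
qed

lemma fr_poly_roots:
  assumes n: "1 \<le> n"
  obtains r :: "nat \<Rightarrow> real"
  where "\<And>k. k \<in> {1..n} \<Longrightarrow> poly (fr_poly n) (r k) = 0"
    and "strict_mono_on {1..n} r"
    and "\<And>k. k \<in> {2..n} \<Longrightarrow> fib k < r k"
    and "\<And>k. k \<in> {1..<n} \<Longrightarrow> r k < fib (Suc k)"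
proof -
  obtain a b :: real where a: "a < 1" "(-1) ^ (n - 1) * poly (fr_poly n) a < 0"
    and b: "fib n < b" "0 < poly (fr_poly n) b"
    using fr_poly_sign_far[OF n] by blast
  define lo where "lo k = (if k = 1 then a else real (fib k))" for k
  define hi where "hi k = (if k = n then b else real (fib (Suc k)))" for k
  have lo_hi: "lo k < hi k" if k: "k \<in> {1..n}" for k
  proof -
    have "1 \<le> real (fib n)" "1 \<le> real (fib (Suc k))"
      using n fib_mono[of 1 n] fib_mono[of 1 "Suc k"] by simp_all
    then have "1 \<le> hi k" using b by (simp add: hi_def)
    moreover have "fib k < hi k" if "2 \<le> k"
      using b fib_strict_mono[OF that, of "Suc k"] by (auto simp: hi_def)
    ultimately show ?thesis using a k by (cases "k = 1") (auto simp: lo_def)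
  qed
  have sign_lo: "(-1) ^ (n - k) * poly (fr_poly n) (lo k) < 0" if "k \<in> {1..n}" for k
    using a fr_poly_sign_at_fib[of k n] that by (cases "k = 1") (auto simp: lo_def)
  have sign_hi: "0 < (-1) ^ (n - k) * poly (fr_poly n) (hi k)" if k: "k \<in> {1..n}" for k
  proof -
    have "n - k = Suc (n - Suc k)" if "k \<noteq> n" using k that by (simp add: Suc_diff_Suc)
    then have "(-1 :: real) ^ (n - k) = - ((-1) ^ (n - Suc k))" if "k \<noteq> n" using that by simp
    then show ?thesis
      using b fr_poly_sign_at_fib[of "Suc k" n] k by (cases "k = n") (auto simp: hi_def)
  qed
  have hi_lo: "hi i \<le> lo j" if "i \<in> {1..n}" "j \<in> {1..n}" "i < j" for i j
    using that by (auto simp: hi_def lo_def intro: fib_mono)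
  obtain r where r: "\<And>k. k \<in> {1..n} \<Longrightarrow> poly (fr_poly n) (r k) = 0 \<and> lo k < r k \<and> r k < hi k"
    and "strict_mono_on {1..n} r"
    using poly_roots_in_intervals[where s = "\<lambda>k. (-1) ^ (n - k)", OF lo_hi sign_lo sign_hi hi_lo]
    by blast
  moreover have "fib k < r k" if "k \<in> {2..n}" for k using r[of k] that by (simp add: lo_def)
  moreover have "r k < fib (Suc k)" if "k \<in> {1..<n}" for k using r[of k] that by (simp add: hi_def)
  ultimately show ?thesis using that by blast
qed

lemma proots_char_poly_FR:
  assumes n: "1 \<le> n"
    and roots: "\<And>k. k \<in> {1..n} \<Longrightarrow> poly (fr_poly n) (r k) = 0"
    and mono: "strict_mono_on {1..n} r"
  shows "proots (char_poly (FR n)) = mset_set ((complex_of_real \<circ> r) ` {1..n})"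
proof (rule proots_eq_mset_set)
  show "char_poly (FR n) \<noteq> 0" by (rule char_poly_FR_ne_zero)
  have "degree (char_poly (FR n)) = n" using degree_monic_char_poly[OF FR_carrier] by simp
  have "inj_on (complex_of_real \<circ> r) {1..n}"
    using strict_mono_on_imp_inj_on[OF mono] inj_on_subset[OF inj_of_real subset_UNIV]
    by (rule comp_inj_on)
  then show "card ((complex_of_real \<circ> r) ` {1..n}) = degree (char_poly (FR n))"
    using \<open>degree (char_poly (FR n)) = n\<close> by (subst card_image) simp_all
qed (use roots in \<open>auto simp: char_poly_FR[OF n] of_real_hom.poly_map_poly\<close>)

lemma FR_eigenvalues:
  assumes n: "1 \<le> n"
  obtains r :: "nat \<Rightarrow> real"
  where "{\<mu>. eigenvalue (FR n) \<mu>} = (complex_of_real \<circ> r) ` {1..n}"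
    and "\<And>\<mu>. eigenvalue (FR n) \<mu> \<Longrightarrow> order \<mu> (char_poly (FR n)) = 1"
    and "strict_mono_on {1..n} r"
    and "\<And>k. k \<in> {2..n} \<Longrightarrow> fib k < r k"
    and "\<And>k. k \<in> {1..<n} \<Longrightarrow> r k < fib (Suc k)"
proof -
  obtain r :: "nat \<Rightarrow> real"
    where roots: "\<And>k. k \<in> {1..n} \<Longrightarrow> poly (fr_poly n) (r k) = 0"
    and mono: "strict_mono_on {1..n} r"
    and bounds: "\<And>k. k \<in> {2..n} \<Longrightarrow> fib k < r k" "\<And>k. k \<in> {1..<n} \<Longrightarrow> r k < fib (Suc k)"
    using fr_poly_roots[OF n] by blast
  define R where "R = (complex_of_real \<circ> r) ` {1..n}"
  have proots: "proots (char_poly (FR n)) = mset_set R"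
    unfolding R_def using proots_char_poly_FR[OF n roots mono] .
  have "{\<mu>. eigenvalue (FR n) \<mu>} = set_mset (proots (char_poly (FR n)))"
    using eigenvalue_root_char_poly[OF FR_carrier] by (simp add: char_poly_FR_ne_zero)
  also have "\<dots> = R" unfolding proots by (simp add: R_def)
  finally have eig: "{\<mu>. eigenvalue (FR n) \<mu>} = R" .
  have "order \<mu> (char_poly (FR n)) = 1" if "eigenvalue (FR n) \<mu>" for \<mu>
  proof -
    have "\<mu> \<in> R" using that eig by blast
    then show ?thesis using proots count_proots[OF char_poly_FR_ne_zero[of n], of \<mu>] by (simp add: R_def)
  qed
  then show ?thesis using that eig mono bounds unfolding R_def by blast
qed

theorem theorem5:
  fixes n :: nat
  assumes "n \<ge> 1"
  shows "(\<forall>\<mu>. eigenvalue (FR n) \<mu> \<longrightarrow>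
            \<mu> \<in> \<real> \<and> order \<mu> (char_poly (FR n)) = 1)
       \<and> (\<forall>l :: nat \<Rightarrow> real.
            n \<ge> 2 \<and> strict_mono_on {1..n} l \<and>
            (complex_of_real \<circ> l) ` {1..n} = {\<mu>. eigenvalue (FR n) \<mu>}
            \<longrightarrow> l 1 < 1
              \<and> (\<forall>i \<in> {2..n-1}. real (fib i) < l i \<and> l i < real (fib (i+1)))
              \<and> l n > real (fib n))"
proof -
  obtain r :: "nat \<Rightarrow> real" where eig: "{\<mu>. eigenvalue (FR n) \<mu>} = (complex_of_real \<circ> r) ` {1..n}"
    and simple: "\<And>\<mu>. eigenvalue (FR n) \<mu> \<Longrightarrow> order \<mu> (char_poly (FR n)) = 1"
    and mono: "strict_mono_on {1..n} r"
    and lower: "\<And>k. k \<in> {2..n} \<Longrightarrow> fib k < r k"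
    and upper: "\<And>k. k \<in> {1..<n} \<Longrightarrow> r k < fib (Suc k)"
    using FR_eigenvalues[OF assms] by blast
  have "\<mu> \<in> \<real> \<and> order \<mu> (char_poly (FR n)) = 1" if "eigenvalue (FR n) \<mu>" for \<mu>
  proof -
    have "\<mu> \<in> (complex_of_real \<circ> r) ` {1..n}" using that eig by blast
    then show ?thesis using simple[OF that] by auto
  qed
  moreover have "l 1 < 1 \<and> (\<forall>i \<in> {2..n-1}. fib i < l i \<and> l i < fib (i + 1)) \<and> fib n < l n"
    if "n \<ge> 2" "strict_mono_on {1..n} l"
      "(complex_of_real \<circ> l) ` {1..n} = {\<mu>. eigenvalue (FR n) \<mu>}" for l :: "nat \<Rightarrow> real"
  proof -
    have "complex_of_real ` l ` {1..n} = complex_of_real ` r ` {1..n}"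
      using that(3) eig by (simp add: image_comp)
    then have "l ` {1..n} = r ` {1..n}" by (simp only: inj_image_eq_iff[OF inj_of_real])
    then have eq: "l i = r i" if "i \<in> {1..n}" for i
      using strict_mono_on_eq_if_image_eq[OF \<open>strict_mono_on {1..n} l\<close> mono _ that] by blast
    show ?thesis using eq lower upper \<open>n \<ge> 2\<close> by force
  qed
  ultimately show ?thesis by blast
qed

end
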